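(* Let $A$ be an associative (not necessarily unital) algebra over a field satisfying the identity $x_1\cdots x_n=x_{\sigma(1)}\cdots x_{\sigma(n)}$ for some $\sigma\in S_n$, and write $i=\sigma(1)$, $j=\sigma(n)$, where $i\ne 1$ and $j\ne n$. Then $H_{n+1}$ contains the cycles $(1\,2\,\ldots\,i)$ and $(j+1\,\ldots\,n+1)$, and $H_{n+2}$ contains the transpositions $(1\,2)$ and $(n+1\,\,n+2)$.
   Context: For each $k$, $H_k\subseteq S_k$ is the set of permutations $\tau$ such that $A$ satisfies $x_1\cdots x_k=x_{\tau(1)}\cdots x_{\tau(k)}$ (i.e. $a_1\cdots a_k=a_{\tau(1)}\cdots a_{\tau(k)}$ for all $a_1,\dots,a_k\in A$). *)

theory Defs
  imports Main "HOL-Combinatorics.Combinatorics"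
begin

fun wprod :: "'a::semigroup_mult list \<Rightarrow> 'a" where
  "wprod [x] = x"
| "wprod (x # y # xs) = x * wprod (y # xs)"
| "wprod [] = undefined"

text \<open>An associative, not necessarily unital, algebra over a field 'k:
  the type 'a is an associative ring (class ring has no unit), with a
  scalar multiplication making it a 'k-vector space, and multiplication bilinear.\<close>
definition assoc_algebra :: "('k::field \<Rightarrow> 'a::ring \<Rightarrow> 'a) \<Rightarrow> bool" where
  "assoc_algebra scale \<longleftrightarrow> vector_space scale \<and>
     (\<forall>c x y. scale c (x * y) = scale c x * y \<and> scale c (x * y) = x * scale c y)"

definition Hset :: "'a::semigroup_mult itself \<Rightarrow> nat \<Rightarrow> (nat \<Rightarrow> nat) set" where
  "Hset _ k = {\<tau>. \<tau> permutes {1..k} \<and>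
     (\<forall>a :: nat \<Rightarrow> 'a. wprod (map a [1..<k+1]) = wprod (map (\<lambda>t. a (\<tau> t)) [1..<k+1]))}"

end

(* Let sigma be in H_m and i = sigma(1). Write the identity x_1 ... x_m = x_sigma(1) ... x_sigma(m)
   in the letters x_2, ..., x_(m+1) and substitute the product x_1 x_(i+1) for the letter x_(i+1).
   On the right this product comes first, so the right side is x_1 times an instance of the
   identity, i.e. x_1 x_2 ... x_(m+1); the left side is the same word with x_1 moved to position i.
   Hence the cycle (1 2 ... i) lies in H_(m+1). Symmetrically, multiplying the last letter
   x_sigma(m) on the right by x_(m+1) puts the cycle (j+1 ... m+1), j = sigma(m), into H_(m+1).
   Applying the first construction to (1 ... i), which sends 1 to 2 when i > 1, and the second to
   the inverse of (j+1 ... n+1), which sends n+1 to n when j < n, gives the transpositions. *)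

theory Submission
  imports Defs
begin

lemma wprod_Cons: "xs \<noteq> [] \<Longrightarrow> wprod (x # xs) = x * wprod xs"
  by (cases xs) auto

lemma wprod_snoc: "xs \<noteq> [] \<Longrightarrow> wprod (xs @ [x]) = wprod xs * x"
  by (induction xs rule: wprod.induct) (auto simp: mult.assoc wprod_Cons)

lemma wprod_merge: "wprod (xs @ (x * y) # ys) = wprod (xs @ x # y # ys)"
proof (induction xs)
  case Nil
  then show ?case by (cases ys) (auto simp: mult.assoc)
next
  case (Cons z xs)
  then show ?case by (simp add: wprod_Cons)
qed

lemma wprod_list_update_mult_left:
  assumes "k < length ws"
  shows "wprod (ws[k := x * ws ! k]) = wprod (take k ws @ x # drop k ws)"
  using assms by (simp add: upd_conv_take_nth_drop wprod_merge Cons_nth_drop_Suc)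

lemma wprod_list_update_mult_right:
  assumes "k < length ws"
  shows "wprod (ws[k := ws ! k * x]) = wprod (take (Suc k) ws @ x # drop (Suc k) ws)"
  using assms by (simp add: upd_conv_take_nth_drop wprod_merge take_Suc_conv_app_nth)

lemma map_fun_upd_nth:
  assumes "distinct xs" "k < length xs"
  shows "map (f(xs ! k := z)) xs = (map f xs)[k := z]"
  using assms by (intro nth_equalityI) (auto simp: nth_list_update nth_eq_iff_index_eq)

lemma permutes_fixed_or_in:
  assumes "p permutes S"
  shows "p x = x \<or> p x \<in> S"
  using assms by (metis permutes_in_image permutes_not_in)

lemma HsetD:
  fixes a :: "nat \<Rightarrow> 'a::semigroup_mult"
  assumes "\<tau> \<in> Hset TYPE('a) k"
  shows "\<tau> permutes {1..k}"
    and "wprod (map a [1..<k+1]) = wprod (map (\<lambda>t. a (\<tau> t)) [1..<k+1])"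
  using assms unfolding Hset_def by blast+

lemma Hset_inv:
  assumes "\<tau> \<in> Hset TYPE('a::semigroup_mult) k"
  shows "inv \<tau> \<in> Hset TYPE('a) k"
proof -
  note perm = HsetD(1)[OF assms]
  have "wprod (map a [1..<k+1]) = wprod (map (\<lambda>t. a (inv \<tau> t)) [1..<k+1])"
    for a :: "nat \<Rightarrow> 'a"
    using HsetD(2)[OF assms, of "\<lambda>t. a (inv \<tau> t)"] permutes_inverses(2)[OF perm] by simp
  then show ?thesis
    using permutes_inv[OF perm] unfolding Hset_def by auto
qed

text \<open>Position \<open>t - 1\<close> of the word holds the value of variable \<open>t\<close>, so variable \<open>\<rho> k\<close>
  sits at position \<open>\<rho> k - 1\<close> on the left and at position \<open>k - 1\<close> on the right.\<close>
lemma Hset_substitute: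
  fixes b :: "nat \<Rightarrow> 'a::semigroup_mult"
  assumes "\<rho> \<in> Hset TYPE('a) m" and k: "k \<in> {1..m}"
  shows "wprod ((map b [1..<m+1])[\<rho> k - 1 := z])
    = wprod ((map (\<lambda>t. b (\<rho> t)) [1..<m+1])[k - 1 := z])"
proof -
  note perm = HsetD(1)[OF assms(1)]
  have "\<rho> k \<in> {1..m}"
    using k permutes_in_image[OF perm] by blast
  then have "\<rho> k - 1 < m" and "\<rho> k = Suc (\<rho> k - 1)"
    by auto
  then have upd: "map (b(\<rho> k := z)) [1..<m+1] = (map b [1..<m+1])[\<rho> k - 1 := z]"
    using map_fun_upd_nth[of "[1..<m+1]" "\<rho> k - 1" b z] by (simp del: upt_Suc)
  have "distinct (map \<rho> [1..<m+1])"
    using permutes_inj[OF perm] by (simp add: distinct_map inj_on_def)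
  moreover have "k - 1 < m" and "k = Suc (k - 1)"
    using k by auto
  ultimately have upd_perm:
    "map (b(\<rho> k := z)) (map \<rho> [1..<m+1]) = (map b (map \<rho> [1..<m+1]))[k - 1 := z]"
    using map_fun_upd_nth[of "map \<rho> [1..<m+1]" "k - 1" b z] by (simp del: upt_Suc map_map)
  have "wprod ((map b [1..<m+1])[\<rho> k - 1 := z]) = wprod (map (b(\<rho> k := z)) [1..<m+1])"
    by (simp only: upd)
  also have "\<dots> = wprod (map (\<lambda>t. (b(\<rho> k := z)) (\<rho> t)) [1..<m+1])"
    by (rule HsetD(2)[OF assms(1)])
  also have "\<dots> = wprod ((map (\<lambda>t. b (\<rho> t)) [1..<m+1])[k - 1 := z])"
    using upd_perm by (simp only: map_map comp_def)
  finally show ?thesis .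
qed

lemma ex_map_upt: "\<exists>b. ws = map b [1..<length ws + 1]"
  by (rule exI[of _ "\<lambda>t. ws ! (t - 1)"]) (auto simp del: upt_Suc intro: nth_equalityI)

lemma wprod_insert_first:
  fixes ws :: "'a::semigroup_mult list"
  assumes "\<rho> \<in> Hset TYPE('a) m" and "length ws = m"
  shows "wprod (x # ws) = wprod (take (\<rho> 1 - 1) ws @ x # drop (\<rho> 1 - 1) ws)"
proof (cases "m = 0")
  case True
  with assms(2) show ?thesis by simp
next
  case False
  define i where "i = \<rho> 1"
  have i: "i \<in> {1..m}"
    using False permutes_in_image[OF HsetD(1)[OF assms(1)]] unfolding i_def by auto
  obtain b where ws: "ws = map b [1..<m+1]"
    using ex_map_upt assms(2) by blast
  let ?V = "map (\<lambda>t. b (\<rho> t)) [1..<m+1]"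
  have "wprod (x # ws) = x * wprod ?V"
    using False HsetD(2)[OF assms(1)] by (simp del: upt_Suc add: ws wprod_Cons)
  also have "\<dots> = wprod (?V[0 := x * b i])"
    using False wprod_list_update_mult_left[of 0 ?V x]
    by (simp del: upt_Suc add: i_def wprod_Cons)
  also have "\<dots> = wprod (ws[i - 1 := x * b i])"
    using Hset_substitute[OF assms(1), of 1 b] False by (simp add: ws i_def)
  also have "\<dots> = wprod (take (i - 1) ws @ x # drop (i - 1) ws)"
  proof -
    have "i - 1 < length ws" and "ws ! (i - 1) = b i"
      using i by (auto simp: ws simp del: upt_Suc)
    then show ?thesis
      using wprod_list_update_mult_left by metis
  qed
  finally show ?thesis unfolding i_def .
qed

lemma wprod_insert_last:
  fixes ws :: "'a::semigroup_mult list"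
  assumes "\<rho> \<in> Hset TYPE('a) m" and "length ws = m"
  shows "wprod (ws @ [x]) = wprod (take (\<rho> m) ws @ x # drop (\<rho> m) ws)"
proof (cases "m = 0")
  case True
  with assms(2) show ?thesis by simp
next
  case False
  define i where "i = \<rho> m"
  have i: "i \<in> {1..m}"
    using False permutes_in_image[OF HsetD(1)[OF assms(1)]] unfolding i_def by auto
  obtain b where ws: "ws = map b [1..<m+1]"
    using ex_map_upt assms(2) by blast
  let ?V = "map (\<lambda>t. b (\<rho> t)) [1..<m+1]"
  have "wprod (ws @ [x]) = wprod ?V * x"
    using False HsetD(2)[OF assms(1)] by (simp del: upt_Suc add: ws wprod_snoc)
  also have "\<dots> = wprod (?V[m - 1 := b i * x])"
    using False wprod_list_update_mult_right[of "m - 1" ?V x]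
    by (simp del: upt_Suc add: i_def wprod_snoc)
  also have "\<dots> = wprod (ws[i - 1 := b i * x])"
    using Hset_substitute[OF assms(1), of m b] False by (simp add: ws i_def)
  also have "\<dots> = wprod (take i ws @ x # drop i ws)"
  proof -
    have "i - 1 < length ws" and "ws ! (i - 1) = b i" and "Suc (i - 1) = i"
      using i by (auto simp: ws simp del: upt_Suc)
    then show ?thesis
      using wprod_list_update_mult_right by metis
  qed
  finally show ?thesis unfolding i_def .
qed

lemma upt_append: "i \<le> j \<Longrightarrow> j \<le> k \<Longrightarrow> [i..<j] @ [j..<k] = [i..<k]"
  using upt_add_eq_append[of i j "k - j"] by simp

lemma map_cycle_of_list_upt:
  assumes "l \<le> p" "p \<le> q" "q \<le> r"
  shows "map (cycle_of_list [p..<q]) [l..<r] = [l..<p] @ rotate1 [p..<q] @ [q..<r]"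
proof -
  have "[l..<r] = [l..<p] @ [p..<q] @ [q..<r]"
    using assms by (simp add: upt_append)
  moreover have "map (cycle_of_list [p..<q]) [p..<q] = rotate1 [p..<q]"
    using cyclic_rotation[of "[p..<q]" 1] by simp
  moreover have "map (cycle_of_list [p..<q]) [l..<p] = [l..<p]"
    and "map (cycle_of_list [p..<q]) [q..<r] = [q..<r]"
    by (auto intro: map_idI simp: id_outside_supp)
  ultimately show ?thesis
    by simp
qed

lemma cycle_of_list_upt_Suc:
  assumes "p \<le> t" "Suc t < q"
  shows "cycle_of_list [p..<q] t = Suc t"
proof -
  have "cycle_of_list [p..<q] t = map (cycle_of_list [p..<q]) [p..<q] ! (t - p)"
    using assms by simp
  also have "\<dots> = ([Suc p..<q] @ [p]) ! (t - p)"
    using map_cycle_of_list_upt[of p p q q] assms by (simp add: upt_conv_Cons)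
  also have "\<dots> = Suc t"
    using assms by (simp add: nth_append)
  finally show ?thesis .
qed

lemma Hset_cycle_first:
  assumes "\<rho> \<in> Hset TYPE('a::semigroup_mult) m"
  shows "cycle_of_list [1..<\<rho> 1 + 1] \<in> Hset TYPE('a) (m + 1)"
proof -
  define i where "i = \<rho> 1"
  let ?c = "cycle_of_list [1..<i + 1]"
  have i: "1 \<le> i" "i \<le> m + 1"
    using permutes_fixed_or_in[OF HsetD(1)[OF assms], of 1] unfolding i_def by auto
  have "?c permutes {1..m + 1}"
    using i by (intro permutes_subset[OF cycle_permutes]) auto
  moreover have "wprod (map a [1..<m + 2]) = wprod (map (\<lambda>t. a (?c t)) [1..<m + 2])"
    for a :: "nat \<Rightarrow> 'a"
  proof -
    let ?ws = "map a [2..<m + 2]"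
    have "rotate1 [1..<i + 1] = [2..<i + 1] @ [1]"
      using i by (simp del: upt_Suc add: upt_conv_Cons numeral_2_eq_2)
    then have c: "map ?c [1..<m + 2] = [2..<i + 1] @ 1 # [i + 1..<m + 2]"
      using map_cycle_of_list_upt[of 1 1 "i + 1" "m + 2"] i by (simp del: upt_Suc)
    have "map (\<lambda>t. a (?c t)) [1..<m + 2] = map a (map ?c [1..<m + 2])"
      by (simp add: comp_def)
    also have "\<dots> = take (i - 1) ?ws @ a 1 # drop (i - 1) ?ws"
      unfolding c using i by (simp del: upt_Suc add: take_map drop_map)
    finally have moved:
      "map (\<lambda>t. a (?c t)) [1..<m + 2] = take (i - 1) ?ws @ a 1 # drop (i - 1) ?ws" .
    have unmoved: "map a [1..<m + 2] = a 1 # ?ws"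
      using upt_conv_Cons[of 1 "m + 2"] by (simp del: upt_Suc add: numeral_2_eq_2)
    have "length ?ws = m"
      by (simp del: upt_Suc)
    then have "wprod (a 1 # ?ws) = wprod (take (i - 1) ?ws @ a 1 # drop (i - 1) ?ws)"
      using wprod_insert_first[OF assms] unfolding i_def by blast
    then show ?thesis
      unfolding moved unmoved .
  qed
  ultimately show ?thesis
    unfolding Hset_def i_def by simp
qed

lemma Hset_cycle_last:
  assumes "\<rho> \<in> Hset TYPE('a::semigroup_mult) m"
  shows "cycle_of_list [\<rho> m + 1..<m + 2] \<in> Hset TYPE('a) (m + 1)"
proof -
  define i where "i = \<rho> m"
  let ?c = "cycle_of_list [i + 1..<m + 2]"
  have i: "i \<le> m"
    using permutes_fixed_or_in[OF HsetD(1)[OF assms], of m] unfolding i_def by auto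
  have "?c permutes {1..m + 1}"
    by (intro permutes_subset[OF cycle_permutes]) auto
  moreover have "wprod (map a [1..<m + 2]) = wprod (map (\<lambda>t. a (?c t)) [1..<m + 2])"
    for a :: "nat \<Rightarrow> 'a"
  proof -
    let ?ws = "map a ([1..<i + 1] @ [i + 2..<m + 2])"
    have "rotate1 [i + 1..<m + 2] = [i + 2..<m + 2] @ [i + 1]"
      using i by (simp del: upt_Suc add: upt_conv_Cons)
    then have c: "map ?c [1..<m + 2] = [1..<i + 1] @ [i + 2..<m + 2] @ [i + 1]"
      using map_cycle_of_list_upt[of 1 "i + 1" "m + 2" "m + 2"] i by (simp del: upt_Suc)
    have "map (\<lambda>t. a (?c t)) [1..<m + 2] = map a (map ?c [1..<m + 2])"
      by (simp add: comp_def)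
    also have "\<dots> = ?ws @ [a (i + 1)]"
      unfolding c by simp
    finally have moved: "map (\<lambda>t. a (?c t)) [1..<m + 2] = ?ws @ [a (i + 1)]" .
    have "[1..<m + 2] = [1..<i + 1] @ (i + 1) # [i + 2..<m + 2]"
      using i upt_append[of 1 "i + 1" "m + 2"] upt_conv_Cons[of "i + 1" "m + 2"]
      by (simp del: upt_Suc)
    then have unmoved: "map a [1..<m + 2] = take i ?ws @ a (i + 1) # drop i ?ws"
      by (simp del: upt_Suc)
    have "length ?ws = m"
      using i by (simp del: upt_Suc)
    then have "wprod (?ws @ [a (i + 1)]) = wprod (take i ?ws @ a (i + 1) # drop i ?ws)"
      using wprod_insert_last[OF assms] unfolding i_def by blast
    then show ?thesis
      unfolding moved unmoved by (rule sym)
  qed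
  ultimately show ?thesis
    unfolding Hset_def i_def by simp
qed

theorem corollary2p9:
  fixes scale :: "'k::field \<Rightarrow> 'a::ring \<Rightarrow> 'a"
    and n :: nat and \<sigma> :: "nat \<Rightarrow> nat"
  assumes "assoc_algebra scale"
    and "\<sigma> \<in> Hset TYPE('a) n"
    and "\<sigma> 1 \<noteq> 1" and "\<sigma> n \<noteq> n"
  shows "cycle_of_list [1..<\<sigma> 1 + 1] \<in> Hset TYPE('a) (n + 1)
    \<and> cycle_of_list [\<sigma> n + 1..<n + 2] \<in> Hset TYPE('a) (n + 1)
    \<and> transpose 1 2 \<in> Hset TYPE('a) (n + 2)
    \<and> transpose (n + 1) (n + 2) \<in> Hset TYPE('a) (n + 2)"
proof -
  define cL where "cL = cycle_of_list [1..<\<sigma> 1 + 1]"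
  define cR where "cR = cycle_of_list [\<sigma> n + 1..<n + 2]"
  have cL: "cL \<in> Hset TYPE('a) (n + 1)"
    unfolding cL_def by (rule Hset_cycle_first[OF assms(2)])
  have cR: "cR \<in> Hset TYPE('a) (n + 1)"
    unfolding cR_def by (rule Hset_cycle_last[OF assms(2)])
  note perm = HsetD(1)[OF assms(2)]
  have "n \<ge> 1"
    using permutes_fixed_or_in[OF perm, of 1] assms(3) by auto
  then have "\<sigma> 1 \<in> {1..n}" and "\<sigma> n \<in> {1..n}"
    using permutes_in_image[OF perm] by auto
  then have "cL 1 = 2" and "cR n = n + 1"
    using assms(3,4) cycle_of_list_upt_Suc[of 1 1 "\<sigma> 1 + 1"]
      cycle_of_list_upt_Suc[of "\<sigma> n + 1" n "n + 2"]
    unfolding cL_def cR_def by (simp_all del: upt_Suc)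
  moreover from \<open>cR n = n + 1\<close> have "inv cR (n + 1) = n"
    using permutes_inv_eq[OF HsetD(1)[OF cR]] by simp
  ultimately have "transpose 1 2 \<in> Hset TYPE('a) (n + 2)"
    and "transpose (n + 1) (n + 2) \<in> Hset TYPE('a) (n + 2)"
    using Hset_cycle_first[OF cL] Hset_cycle_last[OF Hset_inv[OF cR]]
    by (simp_all add: upt_conv_Cons numeral_2_eq_2)
  with cL cR show ?thesis
    unfolding cL_def cR_def by blast
qed

end
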